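(* Let \(G\) be a graph with \(\mathrm{surplus}(G)\geq 2\), and let \(V(G)=O\uplus I\uplus P\) be the Gallai–Edmonds decomposition of \(G\). If \(I\cup P\) is an independent set in \(G\), then: (1) there is at least one vertex \(o\in O\) which has at least two neighbours in \(O\); (2) if \(v\in O\) is a neighbour of some vertex \(o\in O\), \(G'=G[V(G)\setminus\{o\}]\), and \(V(G')=O'\uplus I'\uplus P'\) is the Gallai–Edmonds decomposition of \(G'\), then the induced subgraph \(G'[P']\) contains at least one edge.
   Context: All graphs are finite, undirected and simple. For \(X\subseteq V(G)\), \(N(X)\) is the set of vertices not in \(X\) adjacent to some vertex of \(X\). The surplus of an independent set \(X\) is \(|N(X)|-|X|\); \(\mathrm{surplus}(G)\) is the minimum surplus over all nonempty independent sets of \(G\). The Gallai–Edmonds decomposition of a graph \(H\) is the partition \(V(H)=O\uplus I\uplus P\) where \(O\) is the set of vertices \(v\) such that some maximum matching of \(H\) leaves \(v\) unsaturated, \(I=N(O)\), and \(P=V(H)\setminus(I\cup O)\). *)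

theory Defs
  imports Main
begin

definition graph :: "'a set \<Rightarrow> ('a \<Rightarrow> 'a \<Rightarrow> bool) \<Rightarrow> bool" where
  "graph V E \<longleftrightarrow> finite V \<and> (\<forall>x y. E x y \<longrightarrow> x \<in> V \<and> y \<in> V)
     \<and> (\<forall>x y. E x y \<longrightarrow> E y x) \<and> (\<forall>x. \<not> E x x)"

definition induced :: "('a \<Rightarrow> 'a \<Rightarrow> bool) \<Rightarrow> 'a set \<Rightarrow> 'a \<Rightarrow> 'a \<Rightarrow> bool" where
  "induced E S = (\<lambda>x y. E x y \<and> x \<in> S \<and> y \<in> S)"

definition nbhd :: "'a set \<Rightarrow> ('a \<Rightarrow> 'a \<Rightarrow> bool) \<Rightarrow> 'a set \<Rightarrow> 'a set" where
  "nbhd V E X = {v \<in> V - X. \<exists>x\<in>X. E x v}"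

definition independent :: "'a set \<Rightarrow> ('a \<Rightarrow> 'a \<Rightarrow> bool) \<Rightarrow> 'a set \<Rightarrow> bool" where
  "independent V E X \<longleftrightarrow> X \<subseteq> V \<and> (\<forall>x\<in>X. \<forall>y\<in>X. \<not> E x y)"

definition surplus :: "'a set \<Rightarrow> ('a \<Rightarrow> 'a \<Rightarrow> bool) \<Rightarrow> int" where
  "surplus V E = Min {int (card (nbhd V E X)) - int (card X) | X.
                        X \<noteq> {} \<and> independent V E X}"

definition edges :: "('a \<Rightarrow> 'a \<Rightarrow> bool) \<Rightarrow> 'a set set" where
  "edges E = {{x, y} | x y. E x y}"

definition matching :: "('a \<Rightarrow> 'a \<Rightarrow> bool) \<Rightarrow> 'a set set \<Rightarrow> bool" where
  "matching E M \<longleftrightarrow> M \<subseteq> edges E \<and> (\<forall>e1\<in>M. \<forall>e2\<in>M. e1 \<noteq> e2 \<longrightarrow> e1 \<inter> e2 = {})"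

definition max_matching :: "('a \<Rightarrow> 'a \<Rightarrow> bool) \<Rightarrow> 'a set set \<Rightarrow> bool" where
  "max_matching E M \<longleftrightarrow> matching E M \<and> (\<forall>M'. matching E M' \<longrightarrow> card M' \<le> card M)"

definition GE_O :: "'a set \<Rightarrow> ('a \<Rightarrow> 'a \<Rightarrow> bool) \<Rightarrow> 'a set" where
  "GE_O V E = {v \<in> V. \<exists>M. max_matching E M \<and> v \<notin> \<Union>M}"

definition GE_I :: "'a set \<Rightarrow> ('a \<Rightarrow> 'a \<Rightarrow> bool) \<Rightarrow> 'a set" where
  "GE_I V E = nbhd V E (GE_O V E)"

definition GE_P :: "'a set \<Rightarrow> ('a \<Rightarrow> 'a \<Rightarrow> bool) \<Rightarrow> 'a set" where
  "GE_P V E = V - (GE_I V E \<union> GE_O V E)"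

end

theory Submission
  imports Defs
begin

text \<open>
  If \<open>M\<close> misses \<open>z\<close> and
  \<open>zv\<close> is an edge, then \<open>v\<close> is matched to some \<open>w\<close>, and trading \<open>vw\<close> for \<open>zv\<close> gives
  a maximum matching missing \<open>w\<close>; so \<open>w \<in> O\<close>. And (Gallai) no maximum matching misses
  both ends of a walk whose vertices, except possibly the last, lie in \<open>O\<close>. This follows
  by induction along the walk: two maximum matchings can be exchanged on any union of
  components of their union, and such a union never contains exactly one end of an
  alternating path, because both matchings cover the same number of its vertices.

  (1) If \<open>I \<union> P\<close> is independent, a vertex of \<open>P\<close> would be matched into \<open>O\<close> or into
  \<open>I \<union> P\<close>, both impossible, so \<open>P = {}\<close>. A maximum matching missing a vertex of \<open>O\<close> then
  shows \<open>|I| < |O|\<close>, so \<open>O\<close> is not independent, as the surplus is nonnegative. For an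
  edge \<open>zv\<close> inside \<open>O\<close> the partner \<open>w \<in> O\<close> of \<open>v\<close> gives \<open>v\<close> its second neighbour in \<open>O\<close>.

  (2) This part holds in every graph. The maximum matchings of \<open>G - z\<close> are those of \<open>G\<close>
  missing \<open>z\<close>, so by Gallai's lemma \<open>O'\<close> contains no vertex reachable from \<open>z\<close> inside
  \<open>O\<close>. Hence \<open>v\<close> and \<open>w\<close> lie neither in \<open>O'\<close> nor in \<open>I' = N(O')\<close>, and \<open>vw\<close> is an
  edge of \<open>G'[P']\<close>.
\<close>

definition disjoint_doubletons :: "'a set set \<Rightarrow> bool" where
  "disjoint_doubletons M \<longleftrightarrow> finite M \<and> (\<forall>e\<in>M. \<exists>x y. x \<noteq> y \<and> e = {x, y})
     \<and> (\<forall>e1\<in>M. \<forall>e2\<in>M. e1 \<noteq> e2 \<longrightarrow> e1 \<inter> e2 = {})"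

lemma disjoint_doubletonsD:
  assumes "disjoint_doubletons M"
  shows "finite M" and "e \<in> M \<Longrightarrow> \<exists>x y. x \<noteq> y \<and> e = {x, y}"
    and "e1 \<in> M \<Longrightarrow> e2 \<in> M \<Longrightarrow> e1 \<noteq> e2 \<Longrightarrow> e1 \<inter> e2 = {}"
  using assms unfolding disjoint_doubletons_def by simp_all

lemma disjoint_doubletons_subset:
  "disjoint_doubletons M \<Longrightarrow> M' \<subseteq> M \<Longrightarrow> disjoint_doubletons M'"
  unfolding disjoint_doubletons_def by (meson finite_subset subsetD)

lemma disjoint_doubletons_unique:
  "disjoint_doubletons M \<Longrightarrow> e1 \<in> M \<Longrightarrow> e2 \<in> M \<Longrightarrow> x \<in> e1 \<Longrightarrow> x \<in> e2 \<Longrightarrow> e1 = e2"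
  using disjoint_doubletonsD(3) by fastforce

lemma disjoint_doubletons_partner:
  assumes "disjoint_doubletons M" "x \<in> \<Union>M"
  obtains y where "y \<noteq> x" "{x, y} \<in> M"
proof -
  obtain e where e: "e \<in> M" "x \<in> e" using assms(2) by blast
  obtain p q where pq: "p \<noteq> q" "e = {p, q}"
    using disjoint_doubletonsD(2)[OF assms(1) e(1)] by blast
  show ?thesis
  proof (cases "x = p")
    case True
    then show ?thesis using that[of q] e pq by simp
  next
    case False
    then have "e = {x, p}" using e(2) pq(2) by auto
    then show ?thesis using that[of p] e(1) False by simp
  qed
qed

lemma card_Union_disjoint_doubletons:
  assumes "disjoint_doubletons M"
  shows "card (\<Union>M) = 2 * card M"
proof -
  have card2: "card e = 2" if "e \<in> M" for e
    using disjoint_doubletonsD(2)[OF assms that] by auto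
  have "card (\<Union>M) = sum card M"
  proof (rule card_Union_disjoint)
    show "pairwise disjnt M"
      using disjoint_doubletonsD(3)[OF assms] unfolding pairwise_def disjnt_def by blast
    show "finite e" if "e \<in> M" for e using card2[OF that] card.infinite by fastforce
  qed
  also have "\<dots> = 2 * card M" using card2 by simp
  finally show ?thesis .
qed

lemma finite_Union_disjoint_doubletons:
  "disjoint_doubletons M \<Longrightarrow> finite (\<Union>M)"
  using disjoint_doubletonsD(1,2) by fastforce

definition edge_closed :: "'a set set \<Rightarrow> 'a set \<Rightarrow> bool" where
  "edge_closed F K \<longleftrightarrow> (\<forall>x\<in>K. \<forall>e\<in>F. x \<in> e \<longrightarrow> e \<subseteq> K)"

text \<open>The components of \<open>M \<union> N\<close> are alternating paths and cycles; \<open>path_ends M N\<close>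
  are the ends of the paths.\<close>

definition path_ends :: "'a set set \<Rightarrow> 'a set set \<Rightarrow> 'a set" where
  "path_ends M N = (\<Union>M - \<Union>N) \<union> (\<Union>N - \<Union>M)"

lemma alternating_path_prepend_edge:
  assumes "disjoint_doubletons N" "{v, x} \<in> N" "v \<notin> \<Union>M" "x \<in> \<Union>M"
    and K: "edge_closed (M \<union> (N - {{v, x}})) K" "x \<in> K" "t \<noteq> x"
      "K \<inter> path_ends (N - {{v, x}}) M = {x, t}"
  shows "edge_closed (M \<union> N) (insert v K)" "t \<noteq> v" "insert v K \<inter> path_ends M N = {v, t}"
proof -
  have N_at_vx: "e = {v, x}" if "e \<in> N" "v \<in> e \<or> x \<in> e" for e
    using that(2) disjoint_doubletons_unique[OF assms(1) that(1) assms(2)] by auto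
  have same_ends: "w \<in> path_ends M N \<longleftrightarrow> w \<in> path_ends (N - {{v, x}}) M"
    if "w \<noteq> v" "w \<noteq> x" for w
    using that unfolding path_ends_def by auto
  have v_end: "v \<in> path_ends M N" and x_not_end: "x \<notin> path_ends M N"
    unfolding path_ends_def using assms(2-4) by blast+
  have "v \<notin> path_ends (N - {{v, x}}) M"
    unfolding path_ends_def using assms(3) N_at_vx by blast
  then show t: "t \<noteq> v" using K(4) by blast
  show "insert v K \<inter> path_ends M N = {v, t}"
  proof (intro equalityI subsetI)
    fix w assume w: "w \<in> insert v K \<inter> path_ends M N"
    then have "w \<noteq> x" using x_not_end by blast
    then show "w \<in> {v, t}" using w K(4) same_ends[of w] by (cases "w = v") auto
  next
    fix w assume "w \<in> {v, t}"
    then show "w \<in> insert v K \<inter> path_ends M N" using K(3,4) same_ends[of t] t v_end by auto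
  qed
  show "edge_closed (M \<union> N) (insert v K)"
    unfolding edge_closed_def
  proof (intro ballI impI)
    fix w e assume "w \<in> insert v K" "e \<in> M \<union> N" "w \<in> e"
    show "e \<subseteq> insert v K"
    proof (cases "e = {v, x}")
      case True then show ?thesis using K(2) by blast
    next
      case False
      then have "e \<in> M \<union> (N - {{v, x}})" "w \<in> K"
        using \<open>e \<in> M \<union> N\<close> \<open>w \<in> insert v K\<close> \<open>w \<in> e\<close> N_at_vx assms(3) by blast+
      then show ?thesis using K(1) \<open>w \<in> e\<close> unfolding edge_closed_def by blast
    qed
  qed
qed

text \<open>\<open>K\<close> is the vertex set of the alternating path of \<open>M \<union> N\<close> starting at \<open>v\<close>.\<close>

lemma alternating_path_closure:
  assumes "disjoint_doubletons M" "disjoint_doubletons N" "v \<in> \<Union>N" "v \<notin> \<Union>M"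
  shows "\<exists>K t. edge_closed (M \<union> N) K \<and> v \<in> K \<and> t \<noteq> v \<and> K \<inter> path_ends M N = {v, t}"
  using assms
proof (induction "card (M \<union> N)" arbitrary: M N v rule: less_induct)
  case less
  obtain x where x: "x \<noteq> v" "{v, x} \<in> N"
    using disjoint_doubletons_partner[OF less.prems(2,3)] by blast
  have N_at_vx: "e = {v, x}" if "e \<in> N" "v \<in> e \<or> x \<in> e" for e
    using that(2) disjoint_doubletons_unique[OF less.prems(2) that(1) x(2)] by auto
  show ?case
  proof (cases "x \<in> \<Union>M")
    case False
    have "edge_closed (M \<union> N) {v, x}"
      unfolding edge_closed_def using N_at_vx less.prems(4) False by blast
    moreover have "{v, x} \<inter> path_ends M N = {v, x}"
      unfolding path_ends_def using False less.prems(3,4) x by blast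
    ultimately show ?thesis using x(1) by blast
  next
    case True
    txt \<open>Without the edge \<open>vx\<close>, the rest of the path starts at \<open>x\<close>, which is covered
      by \<open>M\<close> only: recurse with the roles of \<open>M\<close> and \<open>N\<close> exchanged.\<close>
    define N1 where "N1 = N - {{v, x}}"
    have "{v, x} \<notin> M" using less.prems(4) by blast
    then have "M \<union> N1 \<subset> M \<union> N" unfolding N1_def using x(2) by blast
    moreover have "finite (M \<union> N)"
      using disjoint_doubletonsD(1) less.prems(1,2) by blast
    ultimately have smaller: "card (M \<union> N1) < card (M \<union> N)"
      by (simp add: psubset_card_mono)
    have N1: "disjoint_doubletons N1"
      unfolding N1_def using disjoint_doubletons_subset[OF less.prems(2)] by blast
    have "x \<notin> \<Union>N1" unfolding N1_def using N_at_vx by blast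
    then obtain K t where "edge_closed (M \<union> N1) K" "x \<in> K" "t \<noteq> x"
        "K \<inter> path_ends N1 M = {x, t}"
      using less.hyps[OF _ N1 less.prems(1) True] smaller by (auto simp: Un_commute)
    then show ?thesis
      using alternating_path_prepend_edge[OF less.prems(2) x(2) less.prems(4) True]
      unfolding N1_def by blast
  qed
qed

lemma graph_sym: "graph V E \<Longrightarrow> E x y \<Longrightarrow> E y x"
  unfolding graph_def by blast

lemma graph_irrefl: "graph V E \<Longrightarrow> \<not> E x x"
  unfolding graph_def by blast

lemma graph_vertices: "graph V E \<Longrightarrow> E x y \<Longrightarrow> x \<in> V \<and> y \<in> V"
  unfolding graph_def by blast

lemma finite_edges: "graph V E \<Longrightarrow> finite (edges E)"
  unfolding graph_def edges_def by (auto intro: finite_subset[of _ "Pow V"])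

lemma matching_disjoint_doubletons:
  assumes "graph V E" "matching E M"
  shows "disjoint_doubletons M"
proof -
  have "finite M"
    using assms finite_edges unfolding matching_def by (auto intro: finite_subset)
  moreover have "\<exists>x y. x \<noteq> y \<and> e = {x, y}" if e: "e \<in> M" for e
  proof -
    obtain x y where "E x y" "e = {x, y}"
      using assms(2) e unfolding matching_def edges_def by auto
    moreover have "x \<noteq> y" using \<open>E x y\<close> graph_irrefl[OF assms(1)] by metis
    ultimately show ?thesis by blast
  qed
  moreover have "\<forall>e1\<in>M. \<forall>e2\<in>M. e1 \<noteq> e2 \<longrightarrow> e1 \<inter> e2 = {}"
    using assms(2) unfolding matching_def by simp
  ultimately show ?thesis unfolding disjoint_doubletons_def by simp
qed

lemma max_matchingD:
  assumes "graph V E" "max_matching E M"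
  shows "matching E M" and "disjoint_doubletons M" and "finite M"
    and "matching E M' \<Longrightarrow> card M' \<le> card M"
proof -
  show M: "matching E M" using assms(2) unfolding max_matching_def by simp
  show "disjoint_doubletons M" by (rule matching_disjoint_doubletons[OF assms(1) M])
  then show "finite M" by (rule disjoint_doubletonsD(1))
  show "matching E M' \<Longrightarrow> card M' \<le> card M" using assms(2) unfolding max_matching_def by simp
qed

lemma matching_edge:
  assumes "graph V E" "matching E M" "{x, y} \<in> M"
  shows "E x y"
proof -
  obtain a b where ab: "{x, y} = {a, b}" "E a b"
    using assms(2,3) unfolding matching_def edges_def by auto
  then have "(x = a \<and> y = b) \<or> (x = b \<and> y = a)" by (simp add: doubleton_eq_iff)
  then show "E x y" using ab(2) graph_sym[OF assms(1)] by auto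
qed

lemma matching_partner:
  assumes "graph V E" "matching E M" "x \<in> \<Union>M"
  obtains y where "{x, y} \<in> M" "E x y" "y \<in> V"
proof -
  obtain y where "{x, y} \<in> M"
    using disjoint_doubletons_partner[OF matching_disjoint_doubletons[OF assms(1,2)] assms(3)] .
  moreover from this have "E x y" by (rule matching_edge[OF assms(1,2)])
  ultimately show ?thesis using that graph_vertices[OF assms(1)] by blast
qed

lemma max_matching_exists:
  assumes "graph V E"
  obtains M where "max_matching E M"
proof -
  have "card M < Suc (card (edges E))" if "matching E M" for M
    using that finite_edges[OF assms] card_mono unfolding matching_def by fastforce
  moreover have "matching E {}" unfolding matching_def by simp
  ultimately show ?thesis
    using ex_has_greatest_nat[of "matching E" "{}" card] that unfolding max_matching_def by blast
qed

lemma max_matching_covers_edge: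
  assumes "graph V E" "max_matching E M" "E a b"
  shows "a \<in> \<Union>M \<or> b \<in> \<Union>M"
proof (rule ccontr)
  assume uncovered: "\<not> (a \<in> \<Union>M \<or> b \<in> \<Union>M)"
  have "finite M" by (rule max_matchingD(3)[OF assms(1,2)])
  moreover have "{a, b} \<notin> M" using uncovered by blast
  moreover have "{a, b} \<in> edges E" using assms(3) unfolding edges_def by blast
  then have "matching E (insert {a, b} M)"
    using max_matchingD(1)[OF assms(1,2)] uncovered unfolding matching_def by blast
  ultimately show False using max_matchingD(4)[OF assms(1,2)] by fastforce
qed

lemma GE_O_memI: "v \<in> V \<Longrightarrow> max_matching E M \<Longrightarrow> v \<notin> \<Union>M \<Longrightarrow> v \<in> GE_O V E"
  unfolding GE_O_def by blast

lemma partner_of_neighbour_in_GE_O: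
  assumes "graph V E" "max_matching E M" "z \<notin> \<Union>M" "E z v" "{v, w} \<in> M"
  shows "w \<in> GE_O V E"
proof -
  note M = max_matchingD(2,1)[OF assms(1,2)]
  have Evw: "E v w" using matching_edge[OF assms(1) M(2) assms(5)] .
  have at_vw: "e = {v, w}" if "e \<in> M" "v \<in> e \<or> w \<in> e" for e
    using that(2) disjoint_doubletons_unique[OF M(1) that(1) assms(5)] by auto
  define M' where "M' = insert {z, v} (M - {{v, w}})"
  have "z \<noteq> w" "v \<noteq> w" using assms(3,5) graph_irrefl[OF assms(1)] Evw by blast+
  have "M' \<subseteq> edges E"
    using M(2) assms(4) unfolding M'_def matching_def edges_def by blast
  moreover have "e1 \<inter> e2 = {}" if "e1 \<in> M'" "e2 \<in> M'" "e1 \<noteq> e2" for e1 e2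
    using that disjoint_doubletonsD(3)[OF M(1)] at_vw assms(3) unfolding M'_def by blast
  ultimately have "matching E M'" unfolding matching_def by blast
  moreover have "card M' = card M"
  proof -
    have "{z, v} \<notin> M - {{v, w}}" using assms(3) by blast
    then have "card M' = Suc (card (M - {{v, w}}))"
      unfolding M'_def using disjoint_doubletonsD(1)[OF M(1)] by simp
    also have "\<dots> = card M"
      using card.remove[OF disjoint_doubletonsD(1)[OF M(1)] assms(5)] by simp
    finally show ?thesis .
  qed
  ultimately have "max_matching E M'" using assms(2) unfolding max_matching_def by simp
  moreover have "w \<notin> \<Union>M'"
  proof
    assume "w \<in> \<Union>M'"
    then obtain e where e: "e \<in> M'" "w \<in> e" by blast
    show False
    proof (cases "e = {z, v}")
      case True then show False using e(2) \<open>z \<noteq> w\<close> \<open>v \<noteq> w\<close> by simp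
    next
      case False then show False using e at_vw unfolding M'_def by blast
    qed
  qed
  moreover have "w \<in> V" using graph_vertices[OF assms(1) Evw] by simp
  ultimately show ?thesis by (intro GE_O_memI)
qed

definition exchange_on :: "'a set \<Rightarrow> 'a set set \<Rightarrow> 'a set set \<Rightarrow> 'a set set" where
  "exchange_on K N M = {e \<in> N. e \<inter> K = {}} \<union> {e \<in> M. e \<inter> K \<noteq> {}}"

lemma matching_exchange_on:
  assumes "matching E M" "matching E N" "edge_closed (M \<union> N) K"
  shows "matching E (exchange_on K N M)"
proof -
  have inside: "e \<subseteq> K" if "e \<in> M" "e \<inter> K \<noteq> {}" for e
    using assms(3) that unfolding edge_closed_def by blast
  have "exchange_on K N M \<subseteq> edges E"
    using assms(1,2) unfolding exchange_on_def matching_def by blast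
  moreover have "e1 \<inter> e2 = {}"
    if "e1 \<in> exchange_on K N M" "e2 \<in> exchange_on K N M" "e1 \<noteq> e2" for e1 e2
  proof -
    have "(e1 \<in> N \<and> e2 \<in> N) \<or> (e1 \<in> M \<and> e2 \<in> M) \<or> (e1 \<inter> K = {} \<and> e2 \<subseteq> K)
        \<or> (e2 \<inter> K = {} \<and> e1 \<subseteq> K)"
      using that(1,2) inside unfolding exchange_on_def by blast
    moreover have "e1 \<inter> e2 = {}" if "e1 \<in> F" "e2 \<in> F" "matching E F" for F
      using that \<open>e1 \<noteq> e2\<close> unfolding matching_def by simp
    ultimately show ?thesis using assms(1,2) by blast
  qed
  ultimately show ?thesis by (simp add: matching_def)
qed

lemma card_exchange_on:
  assumes "finite M" "finite N"
  shows "card (exchange_on K N M) + card {e \<in> N. e \<inter> K \<noteq> {}}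
    = card N + card {e \<in> M. e \<inter> K \<noteq> {}}"
proof -
  have "card (exchange_on K N M) = card {e \<in> N. e \<inter> K = {}} + card {e \<in> M. e \<inter> K \<noteq> {}}"
    unfolding exchange_on_def using assms by (intro card_Un_disjoint) auto
  moreover have "card N = card ({e \<in> N. e \<inter> K = {}} \<union> {e \<in> N. e \<inter> K \<noteq> {}})"
    by (rule arg_cong[of _ _ card]) blast
  then have "card N = card {e \<in> N. e \<inter> K = {}} + card {e \<in> N. e \<inter> K \<noteq> {}}"
    using assms(2) by (simp add: card_Un_disjoint disjoint_iff)
  ultimately show ?thesis by simp
qed

lemma Union_exchange_on:
  "edge_closed (M \<union> N) K \<Longrightarrow> \<Union>(exchange_on K N M) \<subseteq> (\<Union>N - K) \<union> (\<Union>M \<inter> K)"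
  unfolding exchange_on_def edge_closed_def by blast

lemma card_max_matching_edges_meeting_eq:
  assumes "graph V E" "max_matching E M" "max_matching E N" "edge_closed (M \<union> N) K"
  shows "card {e \<in> M. e \<inter> K \<noteq> {}} = card {e \<in> N. e \<inter> K \<noteq> {}}"
proof -
  note M = max_matchingD[OF assms(1,2)] and N = max_matchingD[OF assms(1,3)]
  have "edge_closed (N \<union> M) K" using assms(4) by (simp add: Un_commute)
  then have "card (exchange_on K N M) \<le> card N" "card (exchange_on K M N) \<le> card M"
    using N(4)[OF matching_exchange_on[OF M(1) N(1) assms(4)]]
      M(4)[OF matching_exchange_on[OF N(1) M(1)]] by blast+
  then show ?thesis
    using card_exchange_on[OF M(3) N(3), of K] card_exchange_on[OF N(3) M(3), of K] by linarith
qed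

lemma max_matching_exchange_on:
  assumes "graph V E" "max_matching E M" "max_matching E N" "edge_closed (M \<union> N) K"
  shows "max_matching E (exchange_on K N M)"
proof -
  note M = max_matchingD[OF assms(1,2)] and N = max_matchingD[OF assms(1,3)]
  have "card (exchange_on K N M) = card N"
    using card_exchange_on[OF M(3) N(3), of K] card_max_matching_edges_meeting_eq[OF assms]
    by linarith
  then show ?thesis
    using matching_exchange_on[OF M(1) N(1) assms(4)] assms(3) unfolding max_matching_def
    by simp
qed

lemma card_max_matching_covered_eq:
  assumes "graph V E" "max_matching E M" "max_matching E N" "edge_closed (M \<union> N) K"
  shows "card (K \<inter> \<Union>M) = card (K \<inter> \<Union>N)"
proof -
  have card_covered: "card (K \<inter> \<Union>F) = 2 * card {e \<in> F. e \<inter> K \<noteq> {}}"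
    if "max_matching E F" "F \<subseteq> M \<union> N" for F
  proof -
    have "K \<inter> \<Union>F = \<Union>{e \<in> F. e \<inter> K \<noteq> {}}"
      using assms(4) that(2) unfolding edge_closed_def by blast
    moreover have "disjoint_doubletons {e \<in> F. e \<inter> K \<noteq> {}}"
      using max_matchingD(2)[OF assms(1) that(1)] by (rule disjoint_doubletons_subset) blast
    ultimately show ?thesis by (simp add: card_Union_disjoint_doubletons)
  qed
  show ?thesis
    using card_covered[OF assms(2)] card_covered[OF assms(3)]
      card_max_matching_edges_meeting_eq[OF assms] by simp
qed

lemma closed_set_not_single_path_end:
  assumes "graph V E" "max_matching E M" "max_matching E N" "edge_closed (M \<union> N) K"
    and "K \<inter> path_ends M N = {c}"
  shows False
proof -
  have fin: "finite (\<Union>M)" "finite (\<Union>N)"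
    using finite_Union_disjoint_doubletons max_matchingD(2) assms(1-3) by blast+
  have same: "K \<inter> \<Union>M - {c} = K \<inter> \<Union>N - {c}"
    using assms(5) unfolding path_ends_def by blast
  have "c \<in> K" using assms(5) by blast
  have eq: "card (K \<inter> \<Union>M) = card (K \<inter> \<Union>N)"
    by (rule card_max_matching_covered_eq[OF assms(1-4)])
  consider "c \<in> \<Union>M" "c \<notin> \<Union>N" | "c \<in> \<Union>N" "c \<notin> \<Union>M"
    using assms(5) unfolding path_ends_def by blast
  then show False
  proof cases
    case 1
    then have "K \<inter> \<Union>M = insert c (K \<inter> \<Union>N)" using same \<open>c \<in> K\<close> by blast
    then show False using eq fin(2) 1(2) by simp
  next
    case 2
    then have "K \<inter> \<Union>N = insert c (K \<inter> \<Union>M)" using same \<open>c \<in> K\<close> by blast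
    then show False using eq fin(1) 2(2) by simp
  qed
qed

lemma edge_closed_Int: "edge_closed F K1 \<Longrightarrow> edge_closed F K2 \<Longrightarrow> edge_closed F (K1 \<inter> K2)"
  unfolding edge_closed_def by blast

lemma max_matching_missing_both:
  assumes "graph V E" "max_matching E N" "max_matching E L" "edge_closed (N \<union> L) K"
    and "x \<in> K" "x \<notin> \<Union>N" "y \<notin> K" "y \<notin> \<Union>L"
  obtains N' where "max_matching E N'" "x \<notin> \<Union>N'" "y \<notin> \<Union>N'"
  using that max_matching_exchange_on[OF assms(1-4)] Union_exchange_on[OF assms(4)] assms(5-8)
  by blast

lemma max_matching_missing_pair_from_triple:
  assumes "graph V E" "max_matching E N" "max_matching E L"
    and "a \<notin> \<Union>N" "b \<notin> \<Union>N" "c \<notin> \<Union>L" "a \<noteq> b" "c \<noteq> a" "c \<noteq> b"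
  shows "\<exists>N'. max_matching E N' \<and> c \<notin> \<Union>N' \<and> (a \<notin> \<Union>N' \<or> b \<notin> \<Union>N')"
proof (rule ccontr)
  assume "\<not> ?thesis"
  then have covered: "c \<in> \<Union>N' \<or> a \<in> \<Union>N'" "c \<in> \<Union>N' \<or> b \<in> \<Union>N'"
    if "max_matching E N'" for N'
    using that by blast+
  have "a \<in> \<Union>L" "b \<in> \<Union>L" "c \<in> \<Union>N"
    using covered[OF assms(3)] covered[OF assms(2)] assms(4,6) by blast+
  note N = max_matchingD(2)[OF assms(1,2)] and L = max_matchingD(2)[OF assms(1,3)]
  obtain Ka ta where Ka: "edge_closed (N \<union> L) Ka" "a \<in> Ka" "Ka \<inter> path_ends N L = {a, ta}"
    using alternating_path_closure[OF N L \<open>a \<in> \<Union>L\<close> assms(4)] by blast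
  obtain Kb tb where Kb: "edge_closed (N \<union> L) Kb" "b \<in> Kb" "Kb \<inter> path_ends N L = {b, tb}"
    using alternating_path_closure[OF N L \<open>b \<in> \<Union>L\<close> assms(5)] by blast
  have "c \<in> Ka"
  proof (rule ccontr)
    assume "c \<notin> Ka"
    then obtain N' where "max_matching E N'" "a \<notin> \<Union>N'" "c \<notin> \<Union>N'"
      using max_matching_missing_both[OF assms(1-3) Ka(1,2) assms(4) _ assms(6)] by blast
    then show False using covered(1) by blast
  qed
  moreover have "c \<in> Kb"
  proof (rule ccontr)
    assume "c \<notin> Kb"
    then obtain N' where "max_matching E N'" "b \<notin> \<Union>N'" "c \<notin> \<Union>N'"
      using max_matching_missing_both[OF assms(1-3) Kb(1,2) assms(5) _ assms(6)] by blast
    then show False using covered(2) by blast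
  qed
  moreover have "c \<in> path_ends N L"
    using \<open>c \<in> \<Union>N\<close> assms(6) unfolding path_ends_def by simp
  ultimately have "c \<in> Ka \<inter> path_ends N L" "c \<in> Kb \<inter> path_ends N L" by blast+
  then have "Ka \<inter> path_ends N L = {a, c}" "Kb \<inter> path_ends N L = {b, c}"
    using Ka(3) Kb(3) assms(8,9) by auto
  then have "Ka \<inter> Kb \<inter> path_ends N L = {c}"
    using assms(7) by auto
  then show False
    using closed_set_not_single_path_end[OF assms(1-3) edge_closed_Int[OF Ka(1) Kb(1)]] by blast
qed

definition GE_O_step :: "'a set \<Rightarrow> ('a \<Rightarrow> 'a \<Rightarrow> bool) \<Rightarrow> 'a \<Rightarrow> 'a \<Rightarrow> bool" where
  "GE_O_step V E x y \<longleftrightarrow> x \<in> GE_O V E \<and> E x y"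

lemma max_matching_covers_GE_O_walk:
  assumes "graph V E"
  shows "(GE_O_step V E)\<^sup>*\<^sup>* a b \<Longrightarrow> a \<noteq> b \<Longrightarrow> max_matching E N \<Longrightarrow> a \<in> \<Union>N \<or> b \<in> \<Union>N"
proof (induction arbitrary: N rule: rtranclp_induct)
  case base
  then show ?case by simp
next
  case (step c b)
  show ?case
  proof (rule ccontr)
    assume "\<not> (a \<in> \<Union>N \<or> b \<in> \<Union>N)"
    then have aN: "a \<notin> \<Union>N" and bN: "b \<notin> \<Union>N" by blast+
    have "c \<in> GE_O V E" "E c b" using step.hyps(2) unfolding GE_O_step_def by blast+
    have "c \<noteq> a" using max_matching_covers_edge[OF assms step.prems(2) \<open>E c b\<close>] aN bN by blast
    have "c \<noteq> b" using graph_irrefl[OF assms] \<open>E c b\<close> by blast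
    obtain L where L: "max_matching E L" "c \<notin> \<Union>L"
      using \<open>c \<in> GE_O V E\<close> unfolding GE_O_def by blast
    then obtain N' where "max_matching E N'" "c \<notin> \<Union>N'" "a \<notin> \<Union>N' \<or> b \<notin> \<Union>N'"
      using max_matching_missing_pair_from_triple[OF assms step.prems(2) L(1) aN bN L(2)
          step.prems(1) \<open>c \<noteq> a\<close> \<open>c \<noteq> b\<close>] by blast
    then show False
      using step.IH \<open>c \<noteq> a\<close> max_matching_covers_edge[OF assms _ \<open>E c b\<close>] by blast
  qed
qed

lemma surplus_le:
  assumes "finite V" "X \<noteq> {}" "independent V E X"
  shows "surplus V E \<le> int (card (nbhd V E X)) - int (card X)"
proof -
  define S where "S = {int (card (nbhd V E X)) - int (card X) | X. X \<noteq> {} \<and> independent V E X}"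
  have "S \<subseteq> (\<lambda>X. int (card (nbhd V E X)) - int (card X)) ` Pow V"
    unfolding S_def independent_def by blast
  then have "finite S" using assms(1) by (meson finite_Pow_iff finite_imageI finite_subset)
  moreover have "int (card (nbhd V E X)) - int (card X) \<in> S"
    unfolding S_def using assms(2,3) by blast
  ultimately show ?thesis unfolding surplus_def S_def[symmetric] by (rule Min_le)
qed

lemma GE_O_subset: "GE_O V E \<subseteq> V"
  unfolding GE_O_def by blast

lemma GE_I_disjoint_GE_O: "x \<in> GE_I V E \<Longrightarrow> x \<notin> GE_O V E"
  unfolding GE_I_def nbhd_def by blast

lemma GE_P_empty_if_independent:
  assumes "graph V E" "independent V E (GE_I V E \<union> GE_P V E)"
  shows "GE_P V E = {}"
proof (rule ccontr)
  assume "GE_P V E \<noteq> {}"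
  then obtain x where x: "x \<in> GE_P V E" by blast
  then have "x \<in> V" "x \<notin> GE_O V E" "x \<notin> GE_I V E" unfolding GE_P_def by blast+
  obtain M where M: "max_matching E M" using max_matching_exists[OF assms(1)] .
  have "x \<in> \<Union>M"
  proof (rule ccontr)
    assume "x \<notin> \<Union>M"
    then show False using GE_O_memI[OF \<open>x \<in> V\<close> M] \<open>x \<notin> GE_O V E\<close> by blast
  qed
  then obtain y where "{x, y} \<in> M" "E x y" "y \<in> V"
    by (rule matching_partner[OF assms(1) max_matchingD(1)[OF assms(1) M]])
  show False
  proof (cases "y \<in> GE_O V E")
    case True
    then have "x \<in> GE_I V E"
      using \<open>x \<in> V\<close> \<open>x \<notin> GE_O V E\<close> graph_sym[OF assms(1) \<open>E x y\<close>]
      unfolding GE_I_def nbhd_def by blast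
    then show False using \<open>x \<notin> GE_I V E\<close> by blast
  next
    case False
    then have "y \<in> GE_I V E \<union> GE_P V E" using \<open>y \<in> V\<close> unfolding GE_P_def by blast
    then show False using assms(2) x \<open>E x y\<close> unfolding independent_def by blast
  qed
qed

lemma card_GE_I_le_card_max_matching:
  assumes "graph V E" "independent V E (GE_I V E)" "max_matching E M"
  shows "card (GE_I V E) \<le> card M"
proof (rule card_le_if_inj_on_rel[where r = "\<lambda>i e. i \<in> e"])
  show "finite M" by (rule max_matchingD(3)[OF assms(1,3)])
  show "\<exists>e. e \<in> M \<and> i \<in> e" if i: "i \<in> GE_I V E" for i
  proof (rule ccontr)
    assume "\<not> (\<exists>e. e \<in> M \<and> i \<in> e)"
    moreover have "i \<in> V" using i unfolding GE_I_def nbhd_def by blast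
    ultimately have "i \<in> GE_O V E" using GE_O_memI[OF _ assms(3), of i] by blast
    then show False using GE_I_disjoint_GE_O[OF i] by contradiction
  qed
  show "i1 = i2" if i: "i1 \<in> GE_I V E" "i2 \<in> GE_I V E" and e: "e \<in> M" "i1 \<in> e" "i2 \<in> e"
    for i1 i2 e
  proof (rule ccontr)
    assume "i1 \<noteq> i2"
    obtain x y where "e = {x, y}"
      using disjoint_doubletonsD(2)[OF max_matchingD(2)[OF assms(1,3)] e(1)] by blast
    then have "e = {i1, i2}" using e(2,3) \<open>i1 \<noteq> i2\<close> by auto
    then have "E i1 i2" using matching_edge[OF assms(1) max_matchingD(1)[OF assms(1,3)]] e(1)
      by simp
    then show False using assms(2) i unfolding independent_def by blast
  qed
qed

lemma card_max_matching_less_card_GE_O: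
  assumes "graph V E" "GE_P V E = {}" "independent V E (GE_I V E)"
    and "max_matching E M" "p \<in> GE_O V E" "p \<notin> \<Union>M"
  shows "card M < card (GE_O V E)"
proof -
  note dd = max_matchingD(2)[OF assms(1,4)]
  have "finite V" using assms(1) unfolding graph_def by simp
  then have fin: "finite (GE_O V E)" by (rule finite_subset[OF GE_O_subset])
  have "card M \<le> card (GE_O V E - {p})"
  proof (rule card_le_if_inj_on_rel[where r = "\<lambda>e u. u \<in> e"])
    show "finite (GE_O V E - {p})" using fin by blast
    show "\<exists>u. u \<in> GE_O V E - {p} \<and> u \<in> e" if e: "e \<in> M" for e
    proof -
      obtain x y where xy: "e = {x, y}" using disjoint_doubletonsD(2)[OF dd e] by blast
      then have "E x y" using matching_edge[OF assms(1) max_matchingD(1)[OF assms(1,4)]] e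
        by simp
      then have "x \<in> V" "y \<in> V" "x \<notin> GE_I V E \<or> y \<notin> GE_I V E"
        using graph_vertices[OF assms(1)] assms(3) unfolding independent_def by blast+
      then have "x \<in> GE_O V E \<or> y \<in> GE_O V E" using assms(2) unfolding GE_P_def by blast
      moreover have "p \<notin> e" using assms(6) e by blast
      ultimately show ?thesis using xy by blast
    qed
    show "e1 = e2" if "e1 \<in> M" "e2 \<in> M" "u \<in> GE_O V E - {p}" "u \<in> e1" "u \<in> e2"
      for e1 e2 u
      using disjoint_doubletons_unique[OF dd that(1,2,4,5)] .
  qed
  also have "\<dots> < card (GE_O V E)" using fin assms(5) by (rule card_Diff1_less)
  finally show ?thesis .
qed

lemma card_GE_I_less_card_GE_O:
  assumes "graph V E" "GE_P V E = {}" "independent V E (GE_I V E)" "GE_O V E \<noteq> {}"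
  shows "card (GE_I V E) < card (GE_O V E)"
proof -
  obtain p where p: "p \<in> GE_O V E" using assms(4) by blast
  then obtain M where M: "max_matching E M" "p \<notin> \<Union>M" unfolding GE_O_def by blast
  show ?thesis
    using card_GE_I_le_card_max_matching[OF assms(1,3) M(1)]
      card_max_matching_less_card_GE_O[OF assms(1-3) M(1) p M(2)] by linarith
qed

lemma GE_O_neighbour_has_GE_O_partner:
  assumes "graph V E" "z \<in> GE_O V E" "E z v"
  obtains w where "w \<in> GE_O V E" "E v w" "w \<noteq> z"
proof -
  obtain M where M: "max_matching E M" "z \<notin> \<Union>M" using assms(2) unfolding GE_O_def by blast
  then have "v \<in> \<Union>M" using max_matching_covers_edge[OF assms(1) M(1) assms(3)] by blast
  then obtain w where "{v, w} \<in> M" "E v w"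
    by (rule matching_partner[OF assms(1) max_matchingD(1)[OF assms(1) M(1)]])
  moreover from this have "w \<in> GE_O V E"
    by (intro partner_of_neighbour_in_GE_O[OF assms(1) M assms(3)])
  moreover have "w \<noteq> z" using \<open>{v, w} \<in> M\<close> M(2) by blast
  ultimately show ?thesis using that by blast
qed

lemma GE_O_vertex_with_two_GE_O_neighbours:
  assumes "graph V E" "V \<noteq> {}" "surplus V E \<ge> 0"
    and "GE_P V E = {}" "independent V E (GE_I V E)"
  shows "\<exists>z\<in>GE_O V E. \<exists>u\<in>GE_O V E. \<exists>w\<in>GE_O V E. u \<noteq> w \<and> E z u \<and> E z w"
proof -
  have "\<exists>z\<in>GE_O V E. \<exists>v\<in>GE_O V E. E z v"
  proof (rule ccontr)
    assume no_edge: "\<not> (\<exists>z\<in>GE_O V E. \<exists>v\<in>GE_O V E. E z v)"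
    have "independent V E (GE_O V E)"
      unfolding independent_def using GE_O_subset no_edge by simp
    moreover have "GE_O V E \<noteq> {}"
    proof
      assume "GE_O V E = {}"
      then have "GE_P V E = V" unfolding GE_P_def GE_I_def nbhd_def by simp
      then show False using assms(2,4) by simp
    qed
    moreover have "finite V" using assms(1) unfolding graph_def by simp
    ultimately have "surplus V E \<le> int (card (GE_I V E)) - int (card (GE_O V E))"
      unfolding GE_I_def by (intro surplus_le)
    then show False
      using card_GE_I_less_card_GE_O[OF assms(1,4,5) \<open>GE_O V E \<noteq> {}\<close>] assms(3) by linarith
  qed
  then obtain z v where zv: "z \<in> GE_O V E" "v \<in> GE_O V E" "E z v" by blast
  obtain w where "w \<in> GE_O V E" "E v w" "w \<noteq> z"
    using GE_O_neighbour_has_GE_O_partner[OF assms(1) zv(1,3)] .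
  then show ?thesis using zv graph_sym[OF assms(1) zv(3)] by blast
qed

lemma max_matching_delete_GE_O:
  assumes "graph V E" "z \<in> GE_O V E"
  shows "max_matching (induced E (V - {z})) N \<longleftrightarrow> max_matching E N \<and> z \<notin> \<Union>N"
proof -
  have "edges (induced E (V - {z})) = {e \<in> edges E. z \<notin> e}"
  proof (intro equalityI subsetI)
    fix e assume "e \<in> edges (induced E (V - {z}))"
    then show "e \<in> {e \<in> edges E. z \<notin> e}" unfolding edges_def induced_def by auto
  next
    fix e assume "e \<in> {e \<in> edges E. z \<notin> e}"
    then obtain x y where "e = {x, y}" "E x y" "z \<notin> e" unfolding edges_def by auto
    then show "e \<in> edges (induced E (V - {z}))"
      using graph_vertices[OF assms(1)] unfolding edges_def induced_def by auto
  qed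
  then have matching_iff: "matching (induced E (V - {z})) N' \<longleftrightarrow> matching E N' \<and> z \<notin> \<Union>N'"
    for N'
    unfolding matching_def by blast
  obtain M where M: "max_matching E M" "z \<notin> \<Union>M" using assms(2) unfolding GE_O_def by blast
  show ?thesis
  proof
    assume N: "max_matching (induced E (V - {z})) N"
    then have "matching E N" "z \<notin> \<Union>N" using matching_iff unfolding max_matching_def by auto
    moreover have "card M \<le> card N"
      using N M matching_iff unfolding max_matching_def by blast
    then have "card M' \<le> card N" if "matching E M'" for M'
      using max_matchingD(4)[OF assms(1) M(1) that] by simp
    ultimately show "max_matching E N \<and> z \<notin> \<Union>N" unfolding max_matching_def by blast
  next
    assume N: "max_matching E N \<and> z \<notin> \<Union>N"
    then have "card M' \<le> card N" if "matching (induced E (V - {z})) M'" for M'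
      using max_matchingD(4)[OF assms(1)] that matching_iff by blast
    then show "max_matching (induced E (V - {z})) N"
      using N matching_iff unfolding max_matching_def by blast
  qed
qed

lemma GE_O_walk_not_in_GE_O_delete:
  assumes "graph V E" "z \<in> GE_O V E" "(GE_O_step V E)\<^sup>*\<^sup>* z y"
  shows "y \<notin> GE_O (V - {z}) (induced E (V - {z}))"
proof
  assume "y \<in> GE_O (V - {z}) (induced E (V - {z}))"
  then obtain N where "max_matching (induced E (V - {z})) N" "y \<notin> \<Union>N" "y \<noteq> z"
    unfolding GE_O_def by blast
  then show False
    using max_matching_covers_GE_O_walk[OF assms(1,3)] max_matching_delete_GE_O[OF assms(1,2)]
    by blast
qed

lemma GE_P_delete_has_edge:
  assumes "graph V E" "z \<in> GE_O V E" "v \<in> GE_O V E" "E z v"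
  shows "\<exists>x\<in>GE_P (V - {z}) (induced E (V - {z})). \<exists>y\<in>GE_P (V - {z}) (induced E (V - {z})).
    induced E (V - {z}) x y"
proof -
  obtain w where w: "w \<in> GE_O V E" "E v w" "w \<noteq> z"
    using GE_O_neighbour_has_GE_O_partner[OF assms(1,2,4)] .
  have "GE_O_step V E z v" "GE_O_step V E v w"
    using assms(2-4) w(2) unfolding GE_O_step_def by blast+
  then have zv: "(GE_O_step V E)\<^sup>*\<^sup>* z v" and zw: "(GE_O_step V E)\<^sup>*\<^sup>* z w"
    by (auto intro: rtranclp.rtrancl_into_rtrancl)
  have in_GE_P: "x \<in> GE_P (V - {z}) (induced E (V - {z}))"
    if "(GE_O_step V E)\<^sup>*\<^sup>* z x" "x \<in> GE_O V E" "x \<in> V - {z}" for x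
  proof -
    have "x \<notin> GE_O (V - {z}) (induced E (V - {z}))"
      by (rule GE_O_walk_not_in_GE_O_delete[OF assms(1,2) that(1)])
    moreover have "x \<notin> GE_I (V - {z}) (induced E (V - {z}))"
    proof
      assume "x \<in> GE_I (V - {z}) (induced E (V - {z}))"
      then obtain y where "y \<in> GE_O (V - {z}) (induced E (V - {z}))" "E y x"
        unfolding GE_I_def nbhd_def induced_def by blast
      moreover have "(GE_O_step V E)\<^sup>*\<^sup>* z y"
        using that(1,2) graph_sym[OF assms(1) \<open>E y x\<close>] unfolding GE_O_step_def
        by (simp add: rtranclp.rtrancl_into_rtrancl)
      ultimately show False using GE_O_walk_not_in_GE_O_delete[OF assms(1,2)] by blast
    qed
    ultimately show ?thesis using that(3) unfolding GE_P_def by blast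
  qed
  have "v \<in> V - {z}" "w \<in> V - {z}"
    using graph_vertices[OF assms(1)] assms(4) w(2,3) graph_irrefl[OF assms(1)] by blast+
  then show ?thesis
    using in_GE_P[OF zv assms(3)] in_GE_P[OF zw w(1)] w(2) unfolding induced_def by blast
qed

theorem lemma5:
  fixes V :: "'a set" and E :: "'a \<Rightarrow> 'a \<Rightarrow> bool"
  assumes "graph V E"
    and "V \<noteq> {}"
    and "surplus V E \<ge> 2"
    and "independent V E (GE_I V E \<union> GE_P V E)"
  shows "(\<exists>z\<in>GE_O V E. \<exists>u\<in>GE_O V E. \<exists>w\<in>GE_O V E. u \<noteq> w \<and> E z u \<and> E z w)
    \<and> (\<forall>z v. z \<in> GE_O V E \<longrightarrow> v \<in> GE_O V E \<longrightarrow> E z v \<longrightarrow>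
         (\<exists>x\<in>GE_P (V - {z}) (induced E (V - {z})).
          \<exists>y\<in>GE_P (V - {z}) (induced E (V - {z})).
            induced E (V - {z}) x y))"
proof
  have "GE_P V E = {}" by (rule GE_P_empty_if_independent[OF assms(1,4)])
  moreover have "independent V E (GE_I V E)"
    using assms(4) unfolding independent_def by blast
  ultimately show "\<exists>z\<in>GE_O V E. \<exists>u\<in>GE_O V E. \<exists>w\<in>GE_O V E. u \<noteq> w \<and> E z u \<and> E z w"
    using GE_O_vertex_with_two_GE_O_neighbours[OF assms(1,2)] assms(3) by simp
next
  show "\<forall>z v. z \<in> GE_O V E \<longrightarrow> v \<in> GE_O V E \<longrightarrow> E z v \<longrightarrow>
         (\<exists>x\<in>GE_P (V - {z}) (induced E (V - {z})).
          \<exists>y\<in>GE_P (V - {z}) (induced E (V - {z})).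
            induced E (V - {z}) x y)"
    using GE_P_delete_has_edge[OF assms(1)] by blast
qed

end
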